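(* Let $k\ge3$. For $0\le m\le P_k-1$ let $S_k^{(m)}=\{N:5+mP_{k-1}\#\le N\le 4+(m+1)P_{k-1}\#\}$, and let $\widetilde P^{(m)<}$ and $\widetilde P^{(m)>}$ be the least and greatest integers in $S_k^{(m)}$ that are coprime to $P_k\#$. For $1\le m\le P_k-1$ define the subset gap $g_m=\widetilde P^{(m)<}-\widetilde P^{(m-1)>}$. Then among the $P_k-1$ subset gaps $g_1,\dots,g_{P_k-1}$, exactly $P_k-2$ equal $P_k-1$ and exactly one equals $P_k+1$.
   Context: $P_k$ denotes the $k$-th prime ($P_1=2$) and $P_k\#=\prod_{i=1}^kP_i$. *)

theory Defs
  imports "HOL-Computational_Algebra.Primes" "HOL-Library.Infinite_Set"
begin

text \<open>P k: the k-th prime, 1-indexed (P 1 = 2).\<close>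
definition P :: "nat \<Rightarrow> nat" where
  "P k = enumerate {p::nat. prime p} (k - 1)"

definition prim :: "nat \<Rightarrow> nat" where
  "prim k = (\<Prod>i\<in>{1..k}. P i)"

definition subsetS :: "nat \<Rightarrow> nat \<Rightarrow> nat set" where
  "subsetS k m = {N. 5 + m * prim (k - 1) \<le> N \<and> N \<le> 4 + (m + 1) * prim (k - 1)}"

definition Plow :: "nat \<Rightarrow> nat \<Rightarrow> nat" where
  "Plow k m = Min {N \<in> subsetS k m. coprime N (prim k)}"

definition Phigh :: "nat \<Rightarrow> nat \<Rightarrow> nat" where
  "Phigh k m = Max {N \<in> subsetS k m. coprime N (prim k)}"

definition subset_gap :: "nat \<Rightarrow> nat \<Rightarrow> int" where
  "subset_gap k m = int (Plow k m) - int (Phigh k (m - 1))"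

end

theory Submission
  imports Defs "HOL-Number_Theory.Cong"
begin

(* Write Q = P(k-1)# and p = P k.  Every r with 1 < r < p has a prime factor below p, which
   divides Q; so m Q + r is not coprime to P k# = Q p when 1 < r < p.  As the block S_k^(m)
   starts at m Q + 5, its least element coprime to Q p is m Q + p.  The block m - 1 ends at
   m Q + 4, so its greatest such element is m Q + 1, or m Q - 1 when p divides m Q + 1.
   Hence every gap is p - 1 or p + 1, and since Q is invertible modulo p, exactly one
   m in 1 .. p - 1 has p | m Q + 1. *)

lemma coprime_mult_add_left_iff:
  fixes a b c :: "'a::semiring_gcd"
  shows "coprime (c * b + a) b \<longleftrightarrow> coprime a b"
  by (simp add: coprime_iff_gcd_eq_1 gcd.commute[of _ b] gcd_add_mult)

lemma card_dvd_mult_add_one: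
  fixes p Q :: nat
  assumes "coprime Q p" "1 < p"
  shows "card {m \<in> {1..p - 1}. p dvd m * Q + 1} = 1"
proof -
  obtain x where x: "[Q * x = 1] (mod p)"
    using cong_solve_coprime_nat[OF assms(1)] by auto
  define m0 where "m0 = (p - 1) * x mod p"
  have "[m0 * Q + 1 = (p - 1) * (Q * x) + 1] (mod p)"
    unfolding m0_def cong_def by (metis mod_add_left_eq mod_mult_left_eq mult.assoc mult.commute)
  also have "[(p - 1) * (Q * x) + 1 = (p - 1) * 1 + 1] (mod p)"
    using x by (intro cong_add cong_scalar_left) auto
  also have "(p - 1) * 1 + 1 = p"
    using assms(2) by simp
  finally have m0_dvd: "p dvd m0 * Q + 1"
    by (simp add: cong_def dvd_eq_mod_eq_0)
  have "m0 \<noteq> 0"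
    using m0_dvd assms(2) by (cases m0) auto
  moreover have "m0 < p"
    unfolding m0_def using assms(2) by simp
  ultimately have m0_mem: "m0 \<in> {1..p - 1}"
    by auto
  have "m = m0" if "m \<in> {1..p - 1}" "p dvd m * Q + 1" for m
  proof -
    have "[m * Q + 1 = m0 * Q + 1] (mod p)"
      using that(2) m0_dvd by (simp add: cong_def dvd_eq_mod_eq_0)
    then have "[m = m0] (mod p)"
      using assms(1) cong_add_rcancel_nat cong_mult_rcancel_nat by metis
    then show ?thesis
      using that(1) \<open>m0 < p\<close> cong_less_modulus_unique_nat by force
  qed
  then have "{m \<in> {1..p - 1}. p dvd m * Q + 1} = {m0}"
    using m0_mem m0_dvd by blast
  then show ?thesis
    by simp
qed

lemma prime_P: "prime (P k)"
  unfolding P_def using enumerate_in_set[OF primes_infinite] by simp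

lemma P_less_P_iff: "P i < P j \<longleftrightarrow> i - 1 < j - 1"
  unfolding P_def using primes_infinite by simp

lemma P_1: "P 1 = 2"
proof -
  have "(LEAST n::nat. prime n) = 2"
    by (rule Least_equality) (auto simp: prime_ge_2_nat)
  then show ?thesis
    unfolding P_def by (simp add: enumerate_0)
qed

lemma P_ge_5:
  assumes "3 \<le> k"
  shows "5 \<le> P k"
proof -
  have "P 1 < P 2" "P 2 < P k"
    using assms by (auto simp: P_less_P_iff)
  then have "4 \<le> P k"
    using P_1 by linarith
  moreover have "P k \<noteq> 4"
    using prime_odd_nat[OF prime_P[of k]] by auto
  ultimately show ?thesis
    by simp
qed

lemma prime_less_P_dvd_prim:
  assumes "prime q" "q < P k"
  shows "q dvd prim (k - 1)"
proof -
  obtain n where n: "enumerate {p::nat. prime p} n = q"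
    using enumerate_Ex[OF primes_infinite] assms(1) by blast
  then have "q = P (Suc n)"
    by (simp add: P_def)
  with assms(2) have "Suc n \<in> {1..k - 1}"
    by (simp add: P_less_P_iff)
  with \<open>q = P (Suc n)\<close> show ?thesis
    unfolding prim_def by (simp add: dvd_prodI)
qed

lemma P_not_dvd_prim: "\<not> P k dvd prim (k - 1)"
proof
  assume "P k dvd prim (k - 1)"
  then obtain i where i: "i \<in> {1..k - 1}" "P k dvd P i"
    unfolding prim_def using prime_dvd_prod_iff[OF _ prime_P] by blast
  then have "P k = P i"
    using prime_P primes_dvd_imp_eq by blast
  moreover have "P i < P k"
    using i(1) by (auto simp: P_less_P_iff)
  ultimately show False
    by simp
qed

lemma coprime_prim_P: "coprime (prim (k - 1)) (P k)"
  using P_not_dvd_prim prime_P by (simp add: prime_imp_coprime coprime_commute)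

lemma prim_pos: "0 < prim k"
  unfolding prim_def using prime_P by (simp add: prime_gt_0_nat)

lemma prim_eq_prim_mult_P:
  assumes "1 \<le> k"
  shows "prim k = prim (k - 1) * P k"
proof -
  obtain j where "k = Suc j"
    using assms by (cases k) auto
  then show ?thesis
    unfolding prim_def by (simp add: atLeastAtMostSuc_conv mult.commute)
qed

lemma prim_ge_6:
  assumes "3 \<le> k"
  shows "6 \<le> prim (k - 1)"
proof -
  have "2 dvd prim (k - 1)" "3 dvd prim (k - 1)"
    using prime_less_P_dvd_prim P_ge_5[OF assms] by simp_all
  then have "6 dvd prim (k - 1)"
    by presburger
  then show ?thesis
    using prim_pos by (simp add: dvd_imp_le)
qed

lemma P_le_prim_add_one: "P k \<le> prim (k - 1) + 1"
proof -
  obtain q where q: "prime q" "q dvd prim (k - 1) + 1"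
    using prime_factor_nat[of "prim (k - 1) + 1"] prim_pos by auto
  then have "\<not> q dvd prim (k - 1)"
    by (metis dvd_add_right_iff not_prime_unit)
  then have "P k \<le> q"
    using prime_less_P_dvd_prim q(1) not_le by blast
  also have "q \<le> prim (k - 1) + 1"
    using q(2) by (simp add: dvd_imp_le)
  finally show ?thesis .
qed

lemma coprime_prim_iff:
  assumes "1 \<le> k"
  shows "coprime N (prim k) \<longleftrightarrow> coprime N (prim (k - 1)) \<and> coprime N (P k)"
  by (simp add: prim_eq_prim_mult_P[OF assms])

lemma coprime_prim_le_mult_add_one:
  assumes "coprime N (prim (k - 1))" "m * prim (k - 1) \<le> N" "N < m * prim (k - 1) + P k"
  shows "N \<le> m * prim (k - 1) + 1"
proof (rule ccontr)
  assume far: "\<not> N \<le> m * prim (k - 1) + 1"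
  define r where "r = N - m * prim (k - 1)"
  have N: "N = m * prim (k - 1) + r" "1 < r" "r < P k"
    using assms(2,3) far by (auto simp: r_def)
  obtain q where q: "prime q" "q dvd r"
    using prime_factor_nat[of r] N(2) by auto
  then have "q \<le> r"
    using N(2) by (simp add: dvd_imp_le)
  then have "q dvd prim (k - 1)"
    using prime_less_P_dvd_prim q(1) N(3) by simp
  moreover have "coprime r (prim (k - 1))"
    using assms(1) N(1) by (simp add: coprime_mult_add_left_iff)
  ultimately show False
    using q by (meson coprime_common_divisor not_prime_unit)
qed

lemma finite_coprime_subsetS: "finite {N \<in> subsetS k m. coprime N (prim k)}"
  by (rule finite_subset[of _ "{..4 + (m + 1) * prim (k - 1)}"]) (auto simp: subsetS_def)

lemma Plow_eq:
  assumes "3 \<le> k" "\<not> P k dvd m"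
  shows "Plow k m = m * prim (k - 1) + P k"
proof -
  let ?Q = "prim (k - 1)" and ?C = "{N \<in> subsetS k m. coprime N (prim k)}"
  have "\<not> P k dvd m * ?Q"
    using assms(2) P_not_dvd_prim prime_P prime_dvd_mult_iff by blast
  then have "coprime (m * ?Q + P k) (P k)"
    using prime_P by (simp add: coprime_commute prime_imp_coprime)
  moreover have "coprime (P k) ?Q"
    using coprime_prim_P coprime_commute by blast
  then have "coprime (m * ?Q + P k) ?Q"
    by (simp only: coprime_mult_add_left_iff)
  ultimately have "m * ?Q + P k \<in> ?C"
    using P_ge_5[OF assms(1)] P_le_prim_add_one[of k] assms(1)
    by (auto simp: subsetS_def coprime_prim_iff)
  moreover have "m * ?Q + P k \<le> N" if "N \<in> ?C" for N
  proof -
    have "coprime N ?Q" "5 + m * ?Q \<le> N"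
      using that assms(1) by (auto simp: coprime_prim_iff subsetS_def)
    then show ?thesis
      using coprime_prim_le_mult_add_one[of N k m] by fastforce
  qed
  ultimately show ?thesis
    unfolding Plow_def by (intro Min_eqI finite_coprime_subsetS)
qed

lemma coprime_in_subsetS_cases:
  assumes "3 \<le> k" "N \<in> subsetS k m" "coprime N (prim k)"
  shows "N < Suc m * prim (k - 1) \<or> N = Suc m * prim (k - 1) + 1"
proof -
  let ?Q = "prim (k - 1)"
  have coprime_Q: "coprime N ?Q"
    using assms by (simp add: coprime_prim_iff)
  have "\<not> coprime (Suc m * ?Q) ?Q"
    using prim_ge_6[OF assms(1)] by (simp only: coprime_mult_left_iff coprime_self) simp
  then have "N \<noteq> Suc m * ?Q"
    using coprime_Q by blast
  moreover have "N < Suc m * ?Q + P k"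
    using assms(2) P_ge_5[OF assms(1)] by (simp add: subsetS_def)
  ultimately show ?thesis
    using coprime_prim_le_mult_add_one[OF coprime_Q, of "Suc m"] by linarith
qed

lemma Phigh_eq_if_not_dvd:
  assumes "3 \<le> k" "\<not> P k dvd Suc m * prim (k - 1) + 1"
  shows "Phigh k m = Suc m * prim (k - 1) + 1"
proof -
  let ?Q = "prim (k - 1)" and ?C = "{N \<in> subsetS k m. coprime N (prim k)}"
  have "coprime (Suc m * ?Q + 1) ?Q"
    by (simp only: coprime_mult_add_left_iff coprime_1_left)
  moreover have "coprime (Suc m * ?Q + 1) (P k)"
    using assms(2) prime_P by (simp add: prime_imp_coprime coprime_commute)
  ultimately have "Suc m * ?Q + 1 \<in> ?C"
    using prim_ge_6[OF assms(1)] assms(1) by (auto simp: subsetS_def coprime_prim_iff)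
  moreover have "N \<le> Suc m * ?Q + 1" if "N \<in> ?C" for N
    using coprime_in_subsetS_cases[OF assms(1)] that by fastforce
  ultimately show ?thesis
    unfolding Phigh_def by (intro Max_eqI finite_coprime_subsetS)
qed

lemma Phigh_eq_if_dvd:
  assumes "3 \<le> k" "P k dvd Suc m * prim (k - 1) + 1"
  shows "Phigh k m = Suc m * prim (k - 1) - 1"
proof -
  let ?Q = "prim (k - 1)" and ?C = "{N \<in> subsetS k m. coprime N (prim k)}"
  have Q6: "6 \<le> ?Q"
    using prim_ge_6[OF assms(1)] .
  then have "Suc m * ?Q - 1 = m * ?Q + (?Q - 1)"
    by simp
  then have "coprime (Suc m * ?Q - 1) ?Q"
    using coprime_diff_one_left_nat[OF prim_pos] by (simp only: coprime_mult_add_left_iff)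
  moreover have "\<not> P k dvd Suc m * ?Q - 1"
  proof
    assume "P k dvd Suc m * ?Q - 1"
    with assms(2) have "P k dvd (Suc m * ?Q + 1) - (Suc m * ?Q - 1)"
      by (rule dvd_diff_nat)
    moreover have "(Suc m * ?Q + 1) - (Suc m * ?Q - 1) = 2"
      using Q6 by simp
    ultimately show False
      using P_ge_5[OF assms(1)] by (auto dest: dvd_imp_le)
  qed
  then have "coprime (Suc m * ?Q - 1) (P k)"
    using prime_P by (simp add: prime_imp_coprime coprime_commute)
  ultimately have "Suc m * ?Q - 1 \<in> ?C"
    using Q6 assms(1) by (auto simp: subsetS_def coprime_prim_iff)
  moreover have "N \<le> Suc m * ?Q - 1" if "N \<in> ?C" for N
  proof -
    have "\<not> coprime (P k) (Suc m * ?Q + 1)"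
      using coprime_absorb_left[OF assms(2)] prime_P not_prime_unit by blast
    moreover have "coprime (P k) N"
      using that assms(1) by (simp add: coprime_prim_iff coprime_commute)
    ultimately show ?thesis
      using coprime_in_subsetS_cases[OF assms(1)] that by fastforce
  qed
  ultimately show ?thesis
    unfolding Phigh_def by (intro Max_eqI finite_coprime_subsetS)
qed

lemma subset_gap_eq:
  assumes "3 \<le> k" "m \<in> {1..P k - 1}"
  shows "subset_gap k m = (if P k dvd m * prim (k - 1) + 1 then int (P k) + 1 else int (P k) - 1)"
proof -
  obtain n where m: "m = Suc n"
    using assms(2) by (cases m) auto
  have "\<not> P k dvd m"
    using assms(2) by (auto dest: dvd_imp_le)
  then have Plow: "Plow k m = m * prim (k - 1) + P k"
    using Plow_eq assms(1) by blast
  have "1 \<le> m * prim (k - 1)"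
    using m prim_pos by (simp add: Suc_leI)
  then show ?thesis
    using Plow Phigh_eq_if_dvd[OF assms(1), of n] Phigh_eq_if_not_dvd[OF assms(1), of n] m
    by (simp add: subset_gap_def of_nat_diff)
qed

theorem lemma9:
  fixes k :: nat
  assumes "k \<ge> 3"
  shows "card {m \<in> {1..P k - 1}. subset_gap k m = int (P k) - 1} = P k - 2
       \<and> card {m \<in> {1..P k - 1}. subset_gap k m = int (P k) + 1} = 1"
proof -
  define A where "A = {m \<in> {1..P k - 1}. P k dvd m * prim (k - 1) + 1}"
  have card_A: "card A = 1"
    unfolding A_def using coprime_prim_P prime_gt_1_nat[OF prime_P] by (rule card_dvd_mult_add_one)
  have "{m \<in> {1..P k - 1}. subset_gap k m = int (P k) - 1} = {1..P k - 1} - A"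
    "{m \<in> {1..P k - 1}. subset_gap k m = int (P k) + 1} = A"
    unfolding A_def using subset_gap_eq[OF assms] by (auto split: if_splits)
  moreover have "A \<subseteq> {1..P k - 1}"
    unfolding A_def by blast
  then have "card ({1..P k - 1} - A) = P k - 2"
    using card_A by (simp add: card_Diff_subset finite_subset)
  ultimately show ?thesis
    using card_A by simp
qed

end
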